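(* For integers $d\ge1$, $m\ge1$ and all $B>0$, \[\sup_{f\in\mathcal F_{d,m,B}}\|p_f\|_{C^m}=\Theta_{m,d}\big(\max\{1,B\}^{m+d}\big),\] and this asymptotic rate is attained by $f_{d,m,B}(x)=Bd^{-1}(x_1+\cdots+x_d)$, i.e. $\|p_{f_{d,m,B}}\|_{C^m}=\Theta_{m,d}(\max\{1,B\}^{m+d})$.
   Context: $\mathcal X=[0,1]^d$ with Lebesgue measure. For bounded measurable $f$: $Z_f=\int_{\mathcal X}e^f dx$ and $p_f=e^f/Z_f$. $\|h\|_{C^m}=\sup_{\alpha\in\mathbb N_0^d,|\alpha|_1\le m}\|\partial^\alpha h\|_\infty$ and $\mathcal F_{d,m,B}=\{f\in C^m(\mathcal X):\|f\|_{C^m}\le B\}$. $\Theta_{m,d}$: both sides bounded by each other up to positive constants depending only on $m,d$, uniformly in $B>0$. *)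

theory Defs
  imports "HOL-Analysis.Analysis"
begin

definition cube :: "(real^'n::finite) set" where
  "cube = {x. \<forall>i. 0 \<le> x$i \<and> x$i \<le> 1}"

definition line_fun :: "'n::finite \<Rightarrow> (real^'n \<Rightarrow> real) \<Rightarrow> real^'n \<Rightarrow> real \<Rightarrow> real" where
  "line_fun i g x = (\<lambda>t. g (\<chi> j. if j = i then t else x$j))"

text \<open>Partial derivative in coordinate i, taken within the cube (one-sided at the boundary).\<close>
definition pd :: "'n::finite \<Rightarrow> (real^'n \<Rightarrow> real) \<Rightarrow> real^'n \<Rightarrow> real" where
  "pd i g x = vector_derivative (line_fun i g x) (at (x$i) within {0..1})"

definition pd_exists :: "'n::finite \<Rightarrow> (real^'n \<Rightarrow> real) \<Rightarrow> real^'n \<Rightarrow> bool" where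
  "pd_exists i g x \<longleftrightarrow> line_fun i g x differentiable (at (x$i) within {0..1})"

text \<open>Iterated partial derivative along a list of coordinates (last element applied first).\<close>
fun dpart :: "'n::finite list \<Rightarrow> (real^'n \<Rightarrow> real) \<Rightarrow> real^'n \<Rightarrow> real" where
  "dpart [] g = g"
| "dpart (i # is) g = pd i (dpart is g)"

definition Cm_on :: "nat \<Rightarrow> (real^'n::finite \<Rightarrow> real) \<Rightarrow> bool" where
  "Cm_on m g \<longleftrightarrow>
     (\<forall>is. length is < m \<longrightarrow> (\<forall>i. \<forall>x\<in>cube. pd_exists i (dpart is g) x)) \<and>
     (\<forall>is. length is \<le> m \<longrightarrow> continuous_on cube (dpart is g))"

definition Cm_norm :: "nat \<Rightarrow> (real^'n::finite \<Rightarrow> real) \<Rightarrow> ereal" where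
  "Cm_norm m g = (SUP p\<in>{(is, x). length is \<le> m \<and> x \<in> cube}. ereal \<bar>dpart (fst p) g (snd p)\<bar>)"

definition Fclass :: "nat \<Rightarrow> real \<Rightarrow> (real^'n::finite \<Rightarrow> real) set" where
  "Fclass m B = {f. Cm_on m f \<and> Cm_norm m f \<le> ereal B}"

definition Zf :: "(real^'n::finite \<Rightarrow> real) \<Rightarrow> real" where
  "Zf f = integral cube (\<lambda>x. exp (f x))"

definition dens :: "(real^'n::finite \<Rightarrow> real) \<Rightarrow> real^'n \<Rightarrow> real" where
  "dens f = (\<lambda>x. exp (f x) / Zf f)"

definition f_lin :: "real \<Rightarrow> real^'n::finite \<Rightarrow> real" where
  "f_lin B = (\<lambda>x. B / real CARD('n) * (\<Sum>i\<in>UNIV. x$i))"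

end

(*
  By the Leibniz rule, an iterated partial derivative of order k of exp f is exp f times a sum of
  at most k! products of derivatives of f of total order k; if every derivative of f up to
  order m is bounded by B, this factor is at most k! * max 1 B ^ k.  Since the gradient of f is
  bounded by B, f stays above f x - d on a subcube of side 1 / max 1 B around x, so that
  Z_f >= exp (f x - d) / max 1 B ^ d, i.e. p_f <= exp d * max 1 B ^ d.  Together this gives the
  upper bound exp d * m! * max 1 B ^ (m + d).
  For f_lin B = a * (x_1 + ... + x_d) with a = B / d one has Z = ((exp a - 1) / a) ^ d.  At the
  corner (1, ..., 1) the value of p is exp B / Z >= max 1 (a ^ d), and its m-th derivative in
  one coordinate is a ^ m times that, which gives the matching lower bound.
*)
theory Submission
  imports Defs
begin

lemma cube_cbox: "(cube :: (real^'n::finite) set) = cbox 0 1"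
  by (auto simp: cube_def mem_box_cart)

lemma cube_coord: "x \<in> cube \<Longrightarrow> x$i \<in> {0..1::real}"
  by (auto simp: cube_def)

lemma line_point_in_cube:
  "x \<in> cube \<Longrightarrow> t \<in> {0..1} \<Longrightarrow> (\<chi> j. if j = i then t else x$j) \<in> cube"
  by (auto simp: cube_def)

lemma line_fun_at_coord: "line_fun i g x (x$i) = g x"
proof -
  have "(\<chi> j. if j = i then x$i else x$j) = x" by (simp add: vec_eq_iff)
  then show ?thesis by (simp add: line_fun_def)
qed

lemma Cm_on_continuous: "Cm_on m g \<Longrightarrow> continuous_on cube g"
  unfolding Cm_on_def by (metis dpart.simps(1) le0 list.size(3))

lemma Cm_on_pd_exists:
  "Cm_on m g \<Longrightarrow> length js < m \<Longrightarrow> x \<in> cube \<Longrightarrow> pd_exists i (dpart js g) x"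
  unfolding Cm_on_def by blast

lemma abs_dpart_le_Cm_norm:
  "length js \<le> m \<Longrightarrow> x \<in> cube \<Longrightarrow> ereal \<bar>dpart js g x\<bar> \<le> Cm_norm m g"
  unfolding Cm_norm_def by (rule SUP_upper2[of "(js, x)"]) auto

lemma Fclass_dpart_abs_le:
  assumes "f \<in> Fclass m B" "length js \<le> m" "x \<in> cube"
  shows "\<bar>dpart js f x\<bar> \<le> B"
proof -
  have "ereal \<bar>dpart js f x\<bar> \<le> Cm_norm m f" using assms(2,3) by (rule abs_dpart_le_Cm_norm)
  also have "\<dots> \<le> ereal B" using assms(1) by (simp add: Fclass_def)
  finally show ?thesis by simp
qed

subsection \<open>Partial derivatives on the cube\<close>

lemma pd_intro:
  assumes "x \<in> cube" "(line_fun i g x has_real_derivative D) (at (x$i) within {0..1})"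
  shows "pd_exists i g x \<and> pd i g x = D"
proof
  show "pd_exists i g x"
    using assms(2) unfolding pd_exists_def by (auto simp: differentiable_def has_field_derivative_def)
  show "pd i g x = D"
    unfolding pd_def using assms cube_coord[OF assms(1)]
    by (intro vector_derivative_within_closed_interval)
       (auto simp: has_real_derivative_iff_has_vector_derivative)
qed

lemma pd_has_real_derivative:
  "pd_exists i g x \<Longrightarrow> (line_fun i g x has_real_derivative pd i g x) (at (x$i) within {0..1})"
  unfolding pd_exists_def pd_def
  by (simp add: vector_derivative_works has_real_derivative_iff_has_vector_derivative)

lemma pd_cong:
  assumes "x \<in> cube" "\<forall>y\<in>cube. g y = h y"
  shows "pd i g x = pd i h x \<and> (pd_exists i g x \<longleftrightarrow> pd_exists i h x)"
proof -
  have "line_fun i g x t = line_fun i h x t" if "t \<in> {0..1}" for t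
    using assms line_point_in_cube[OF assms(1) that] by (auto simp: line_fun_def)
  then have "(line_fun i g x has_derivative D) (at (x$i) within {0..1}) \<longleftrightarrow>
             (line_fun i h x has_derivative D) (at (x$i) within {0..1})" for D
    using has_derivative_transform[of "x$i" "{0..1}", OF cube_coord[OF assms(1)]] by metis
  then show ?thesis
    unfolding pd_def pd_exists_def vector_derivative_def differentiable_def
      has_vector_derivative_def by auto
qed

lemma pd_const_on_cube:
  assumes "x \<in> cube" "\<forall>y\<in>cube. g y = c"
  shows "pd_exists i g x \<and> pd i g x = 0"
proof -
  have "pd_exists i (\<lambda>y. c) x \<and> pd i (\<lambda>y. c) x = 0"
    using assms(1) by (intro pd_intro) (auto simp: line_fun_def)
  then show ?thesis using pd_cong[OF assms(1), of g "\<lambda>y. c" i] assms(2) by simp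
qed

lemma pd_add:
  assumes x: "x \<in> cube" and g: "pd_exists i g x" and h: "pd_exists i h x"
  shows "pd_exists i (\<lambda>y. g y + h y) x \<and> pd i (\<lambda>y. g y + h y) x = pd i g x + pd i h x"
proof (rule pd_intro[OF x])
  have "line_fun i (\<lambda>y. g y + h y) x = (\<lambda>t. line_fun i g x t + line_fun i h x t)"
    by (simp add: line_fun_def)
  then show "(line_fun i (\<lambda>y. g y + h y) x has_real_derivative pd i g x + pd i h x)
      (at (x$i) within {0..1})"
    using DERIV_add[OF pd_has_real_derivative[OF g] pd_has_real_derivative[OF h]] by simp
qed

lemma pd_cmult:
  assumes x: "x \<in> cube" and g: "pd_exists i g x"
  shows "pd_exists i (\<lambda>y. c * g y) x \<and> pd i (\<lambda>y. c * g y) x = c * pd i g x"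
proof (rule pd_intro[OF x])
  have "line_fun i (\<lambda>y. c * g y) x = (\<lambda>t. c * line_fun i g x t)"
    by (simp add: line_fun_def)
  then show "(line_fun i (\<lambda>y. c * g y) x has_real_derivative c * pd i g x) (at (x$i) within {0..1})"
    using DERIV_cmult[OF pd_has_real_derivative[OF g]] by simp
qed

lemma pd_mult:
  assumes x: "x \<in> cube" and g: "pd_exists i g x" and h: "pd_exists i h x"
  shows "pd_exists i (\<lambda>y. g y * h y) x \<and>
    pd i (\<lambda>y. g y * h y) x = pd i g x * h x + g x * pd i h x"
proof (rule pd_intro[OF x])
  have "line_fun i (\<lambda>y. g y * h y) x = (\<lambda>t. line_fun i g x t * line_fun i h x t)"
    by (simp add: line_fun_def)
  then show "(line_fun i (\<lambda>y. g y * h y) x has_real_derivative pd i g x * h x + g x * pd i h x)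
      (at (x$i) within {0..1})"
    using DERIV_mult[OF pd_has_real_derivative[OF g] pd_has_real_derivative[OF h]]
    by (simp add: line_fun_at_coord algebra_simps)
qed

lemma pd_exp_divide:
  assumes x: "x \<in> cube" and g: "pd_exists i g x"
  shows "pd_exists i (\<lambda>y. exp (g y) / Z) x \<and>
    pd i (\<lambda>y. exp (g y) / Z) x = exp (g x) / Z * pd i g x"
proof (rule pd_intro[OF x])
  have "line_fun i (\<lambda>y. exp (g y) / Z) x = (\<lambda>t. exp (line_fun i g x t) / Z)"
    by (simp add: line_fun_def)
  then show "(line_fun i (\<lambda>y. exp (g y) / Z) x has_real_derivative exp (g x) / Z * pd i g x)
      (at (x$i) within {0..1})"
    using DERIV_cdivide[OF DERIV_exp[THEN DERIV_chain2, OF pd_has_real_derivative[OF g]], of Z]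
    by (simp add: line_fun_at_coord)
qed

lemma pd_exp_divide_mult:
  assumes x: "x \<in> cube" and f: "pd_exists i f x" and Q: "pd_exists i Q x"
  shows "pd i (\<lambda>y. exp (f y) / Z * Q y) x = exp (f x) / Z * (pd i f x * Q x + pd i Q x)"
  using pd_mult[OF x _ Q, of "\<lambda>y. exp (f y) / Z"] pd_exp_divide[OF x f, of Z]
  by (simp add: algebra_simps)

subsection \<open>Graded bounds for products of derivatives\<close>

text \<open>\<open>graded_bound M r k c h\<close> is the bound obeyed by a homogeneous polynomial \<open>h\<close> of degree \<open>k\<close>,
  with coefficient mass \<open>c\<close>, in partial derivatives of a function that are all bounded by \<open>M\<close>:
  by the Leibniz rule each partial derivative of \<open>h\<close> is again such a polynomial, of degree
  \<open>k + 1\<close> and mass \<open>k * c\<close>, and this can be iterated \<open>r\<close> times.\<close>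
fun graded_bound :: "real \<Rightarrow> nat \<Rightarrow> nat \<Rightarrow> real \<Rightarrow> (real^'n::finite \<Rightarrow> real) \<Rightarrow> bool" where
  "graded_bound M 0 k c h \<longleftrightarrow> (\<forall>x\<in>cube. \<bar>h x\<bar> \<le> c * M^k)"
| "graded_bound M (Suc r) k c h \<longleftrightarrow> (\<forall>x\<in>cube. \<bar>h x\<bar> \<le> c * M^k) \<and>
     (\<forall>i. \<forall>x\<in>cube. pd_exists i h x) \<and> (\<forall>i. graded_bound M r (Suc k) (real k * c) (pd i h))"

lemma graded_bound_abs_le: "graded_bound M r k c h \<Longrightarrow> x \<in> cube \<Longrightarrow> \<bar>h x\<bar> \<le> c * M^k"
  by (cases r) auto

lemma graded_bound_Suc_imp: "graded_bound M (Suc r) k c h \<Longrightarrow> graded_bound M r k c h"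
  by (induction r arbitrary: k c h) auto

lemma graded_bound_cong:
  "graded_bound M r k c g \<Longrightarrow> \<forall>x\<in>cube. g x = h x \<Longrightarrow> graded_bound M r k c h"
proof (induction r arbitrary: k c g h)
  case 0
  then show ?case by simp
next
  case (Suc r)
  have pd_eq: "\<forall>x\<in>cube. pd i g x = pd i h x"
    and ex_eq: "\<forall>x\<in>cube. pd_exists i g x = pd_exists i h x" for i
    using pd_cong Suc.prems(2) by blast+
  have "graded_bound M r (Suc k) (real k * c) (pd i h)" for i
    using Suc.IH[OF _ pd_eq] Suc.prems(1) by simp
  then show ?case using Suc.prems ex_eq by auto
qed

lemma graded_bound_abs_add_le:
  assumes "graded_bound M r k c g" "graded_bound M r k c' h" "x \<in> cube"
  shows "\<bar>g x + h x\<bar> \<le> (c + c') * M^k"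
  using graded_bound_abs_le[OF assms(1,3)] graded_bound_abs_le[OF assms(2,3)]
    abs_triangle_ineq[of "g x" "h x"] by (simp add: distrib_right)

lemma graded_bound_add:
  "graded_bound M r k c g \<Longrightarrow> graded_bound M r k c' h \<Longrightarrow>
   graded_bound M r k (c + c') (\<lambda>x. g x + h x)"
proof (induction r arbitrary: k c c' g h)
  case 0
  then show ?case using graded_bound_abs_add_le[OF 0] by simp
next
  case (Suc r)
  have pd_sum: "pd_exists i (\<lambda>x. g x + h x) x \<and> pd i (\<lambda>x. g x + h x) x = pd i g x + pd i h x"
    if "x \<in> cube" for i x
    using Suc.prems pd_add[OF that, of i g h] that by simp
  have "graded_bound M r (Suc k) (real k * (c + c')) (pd i (\<lambda>x. g x + h x))" for i
  proof (rule graded_bound_cong)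
    show "graded_bound M r (Suc k) (real k * (c + c')) (\<lambda>x. pd i g x + pd i h x)"
      using Suc by (simp add: distrib_left)
  qed (use pd_sum in simp)
  then show ?case using graded_bound_abs_add_le[OF Suc.prems] pd_sum by simp
qed

lemma graded_bound_abs_mult_le:
  assumes "graded_bound M r a c g" "graded_bound M r b c' h" "x \<in> cube"
  shows "\<bar>g x * h x\<bar> \<le> c * c' * M^(a + b)"
proof -
  have g: "\<bar>g x\<bar> \<le> c * M^a" and h: "\<bar>h x\<bar> \<le> c' * M^b"
    using graded_bound_abs_le assms by blast+
  have "\<bar>g x\<bar> * \<bar>h x\<bar> \<le> (c * M^a) * (c' * M^b)"
    by (rule mult_mono[OF g h]) (use g abs_ge_zero[of "g x"] in linarith, simp)
  then show ?thesis by (simp add: abs_mult power_add mult_ac)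
qed

lemma graded_bound_mult:
  "0 \<le> c \<Longrightarrow> 0 \<le> c' \<Longrightarrow> graded_bound M r a c g \<Longrightarrow> graded_bound M r b c' h \<Longrightarrow>
   graded_bound M r (a + b) (c * c') (\<lambda>x. g x * h x)"
proof (induction r arbitrary: a b c c' g h)
  case 0
  then show ?case using graded_bound_abs_mult_le[OF 0(3,4)] by simp
next
  case (Suc r)
  note g = Suc.prems(3) graded_bound_Suc_imp[OF Suc.prems(3)]
  note h = Suc.prems(4) graded_bound_Suc_imp[OF Suc.prems(4)]
  have pd_prod: "pd_exists i (\<lambda>x. g x * h x) x \<and>
      pd i (\<lambda>x. g x * h x) x = pd i g x * h x + g x * pd i h x" if "x \<in> cube" for i x
    using g h pd_mult[OF that, of i g h] that by simp
  have "graded_bound M r (Suc (a + b)) (real (a + b) * (c * c')) (pd i (\<lambda>x. g x * h x))" for i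
  proof (rule graded_bound_cong)
    have gi: "graded_bound M r (Suc a) (real a * c) (pd i g)"
      and hi: "graded_bound M r (Suc b) (real b * c') (pd i h)"
      using g(1) h(1) by simp_all
    have "graded_bound M r (Suc a + b) (real a * c * c') (\<lambda>x. pd i g x * h x)"
      using Suc.IH[OF _ _ gi h(2)] Suc.prems(1,2) by simp
    moreover have "graded_bound M r (a + Suc b) (c * (real b * c')) (\<lambda>x. g x * pd i h x)"
      using Suc.IH[OF _ _ g(2) hi] Suc.prems(1,2) by simp
    ultimately have "graded_bound M r (Suc (a + b)) (real a * c * c' + c * (real b * c'))
        (\<lambda>x. pd i g x * h x + g x * pd i h x)"
      using graded_bound_add by fastforce
    moreover have "real a * c * c' + c * (real b * c') = real (a + b) * (c * c')"
      by (simp add: algebra_simps)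
    ultimately show "graded_bound M r (Suc (a + b)) (real (a + b) * (c * c'))
        (\<lambda>x. pd i g x * h x + g x * pd i h x)"
      by simp
  qed (use pd_prod in simp)
  then show ?case using graded_bound_abs_mult_le[OF g(1) h(1)] pd_prod by simp
qed

lemma graded_bound_zero: "graded_bound M r k 0 (\<lambda>x::real^'n::finite. 0)"
proof (induction r arbitrary: k)
  case 0
  show ?case by simp
next
  case (Suc r)
  have pd_zero: "pd_exists i (\<lambda>x::real^'n. 0) x \<and> pd i (\<lambda>x::real^'n. 0) x = 0"
    if "x \<in> cube" for i x
    using pd_const_on_cube[OF that, of "\<lambda>x. 0" 0] by simp
  have "graded_bound M r (Suc k) 0 (pd i (\<lambda>x::real^'n. 0))" for i
    using graded_bound_cong[OF Suc.IH] pd_zero by simp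
  then show ?case using pd_zero by simp
qed

lemma graded_bound_one: "graded_bound M r 0 1 (\<lambda>x::real^'n::finite. 1)"
proof (cases r)
  case 0
  then show ?thesis by simp
next
  case (Suc r')
  have pd_one: "pd_exists i (\<lambda>x::real^'n. 1) x \<and> pd i (\<lambda>x::real^'n. 1) x = 0"
    if "x \<in> cube" for i x
    using pd_const_on_cube[OF that, of "\<lambda>x. 1" 1] by simp
  have "graded_bound M r' 1 0 (pd i (\<lambda>x::real^'n. 1))" for i
    using graded_bound_cong[OF graded_bound_zero, of "pd i (\<lambda>x. 1)"] pd_one by simp
  then show ?thesis using Suc pd_one by simp
qed

lemma graded_bound_dpart:
  fixes f :: "real^'n::finite \<Rightarrow> real"
  assumes f: "Cm_on m f" and bound: "\<And>js x. length js \<le> m \<Longrightarrow> x \<in> cube \<Longrightarrow> \<bar>dpart js f x\<bar> \<le> M"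
    and M1: "1 \<le> M"
  shows "1 \<le> length js \<Longrightarrow> length js + r \<le> m \<Longrightarrow> 1 \<le> c \<Longrightarrow>
    graded_bound M r (length js) c (dpart js f)"
proof (induction r arbitrary: js c)
  have top: "\<forall>x\<in>cube. \<bar>dpart js f x\<bar> \<le> c * M ^ length js"
    if "1 \<le> length js" "length js \<le> m" "1 \<le> c" for js :: "'n list" and c
  proof -
    have "M \<le> M ^ length js" using power_increasing[of 1 "length js" M] that M1 by simp
    also have "\<dots> \<le> c * M ^ length js" using that M1 by (simp add: mult_le_cancel_right1)
    finally show ?thesis using bound that(2) by (meson order.trans)
  qed
  {
    case 0
    then show ?case using top by simp
  next
    case (Suc r)
    have "1 \<le> real (length js) * c"
      using mult_mono[of 1 "real (length js)" 1 c] Suc.prems by simp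
    then have "graded_bound M r (Suc (length js)) (real (length js) * c) (pd i (dpart js f))" for i
      using Suc.IH[of "i # js"] Suc.prems by simp
    then show ?case using top Suc.prems Cm_on_pd_exists[OF f] by simp
  }
qed

lemma dpart_exp_divide:
  fixes f :: "real^'n::finite \<Rightarrow> real"
  assumes f: "Cm_on m f" and bound: "\<And>js x. length js \<le> m \<Longrightarrow> x \<in> cube \<Longrightarrow> \<bar>dpart js f x\<bar> \<le> M"
    and M1: "1 \<le> M"
  shows "length is \<le> m \<Longrightarrow> \<exists>Q. graded_bound M (m - length is) (length is) (fact (length is)) Q \<and>
      (\<forall>x\<in>cube. dpart is (\<lambda>y. exp (f y) / Z) x = exp (f x) / Z * Q x)"
proof (induction "is")
  case Nil
  show ?case by (rule exI[of _ "\<lambda>x. 1"]) (simp add: graded_bound_one)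
next
  case (Cons i "is")
  let ?g = "\<lambda>y. exp (f y) / Z"
  let ?k = "length is"
  define r where "r = m - Suc ?k"
  have "length is \<le> m" and m_minus_k: "m - ?k = Suc r"
    using Cons.prems unfolding r_def by simp_all
  from Cons.IH[OF this(1)] obtain Q where Q: "graded_bound M (Suc r) ?k (fact ?k) Q"
    and Qeq: "\<forall>x\<in>cube. dpart is ?g x = ?g x * Q x"
    unfolding m_minus_k by blast
  have f_pd: "pd_exists i f x" if "x \<in> cube" for x
    using Cm_on_pd_exists[OF f, of "[]"] Cons.prems that by simp
  have pd_f: "graded_bound M r 1 1 (pd i f)"
    using graded_bound_dpart[OF f bound M1, of "[i]" r 1] Cons.prems r_def by simp
  have "graded_bound M r (1 + ?k) (1 * fact ?k) (\<lambda>x. pd i f x * Q x)"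
    using graded_bound_mult[OF _ _ pd_f graded_bound_Suc_imp[OF Q]] by simp
  moreover have "graded_bound M r (Suc ?k) (real ?k * fact ?k) (pd i Q)"
    using Q by simp
  ultimately have "graded_bound M r (Suc ?k) (1 * fact ?k + real ?k * fact ?k)
      (\<lambda>x. pd i f x * Q x + pd i Q x)"
    using graded_bound_add by simp
  moreover have "1 * fact ?k + real ?k * fact ?k = (fact (Suc ?k) :: real)"
    by (simp add: algebra_simps)
  moreover have "dpart (i # is) ?g x = ?g x * (pd i f x * Q x + pd i Q x)" if x: "x \<in> cube" for x
    using pd_cong[OF x Qeq, of i] pd_exp_divide_mult[OF x f_pd[OF x], of Q Z] Q x by simp
  ultimately show ?case
    using m_minus_k by (intro exI[of _ "\<lambda>x. pd i f x * Q x + pd i Q x"]) (simp add: r_def)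
qed

subsection \<open>The normalising constant and the upper bound\<close>

lemma line_fun_lipschitz:
  assumes pd_ex: "\<forall>i. \<forall>x\<in>cube. pd_exists i f x" and pd_le: "\<forall>i. \<forall>x\<in>cube. \<bar>pd i f x\<bar> \<le> B"
    and z: "z \<in> cube" and s: "s \<in> {0..1}" and t: "t \<in> {0..1}"
  shows "\<bar>line_fun i f z t - line_fun i f z s\<bar> \<le> B * \<bar>t - s\<bar>"
proof -
  define p where "p u = (\<chi> j. if j = i then u else z$j)" for u
  have "(line_fun i f z has_field_derivative pd i f (p u)) (at u within {0..1})"
    and "\<bar>pd i f (p u)\<bar> \<le> B" if u: "u \<in> {0..1}" for u
  proof -
    have p: "p u \<in> cube" unfolding p_def by (rule line_point_in_cube[OF z u])
    have "line_fun i f (p u) = line_fun i f z" and "p u $ i = u"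
      by (auto simp: line_fun_def p_def fun_eq_iff intro!: arg_cong[where f=f])
    then show "(line_fun i f z has_field_derivative pd i f (p u)) (at u within {0..1})"
      using pd_has_real_derivative[of i f "p u"] pd_ex p by simp
    show "\<bar>pd i f (p u)\<bar> \<le> B" using pd_le p by blast
  qed
  then have "norm (line_fun i f z t - line_fun i f z s) \<le> B * norm (t - s)"
    using s t by (intro field_differentiable_bound[where S="{0..1}"]) auto
  then show ?thesis by simp
qed

text \<open>Moving one coordinate at a time, from \<open>x\<close> to \<open>y\<close>.\<close>
lemma lipschitz_l1_cube:
  assumes pd_ex: "\<forall>i. \<forall>x\<in>cube. pd_exists i f x" and pd_le: "\<forall>i. \<forall>x\<in>cube. \<bar>pd i f x\<bar> \<le> B"
    and x: "x \<in> cube" and y: "y \<in> cube"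
  shows "\<bar>f y - f x\<bar> \<le> B * (\<Sum>j\<in>UNIV. \<bar>y$j - x$j\<bar>)"
proof -
  have "\<bar>f (\<chi> j. if j \<in> S then y$j else x$j) - f x\<bar> \<le> B * (\<Sum>j\<in>S. \<bar>y$j - x$j\<bar>)" for S
    using finite[of S]
  proof (induction S rule: finite_induct)
    case empty
    have "(\<chi> j. if j \<in> {} then y$j else x$j) = x" by (simp add: vec_eq_iff)
    then show ?case by simp
  next
    case (insert i S)
    let ?z = "\<chi> j. if j \<in> S then y$j else x$j"
    have z: "?z \<in> cube" using x y by (auto simp: cube_def)
    have "\<bar>line_fun i f ?z (y$i) - line_fun i f ?z (?z$i)\<bar> \<le> B * \<bar>y$i - ?z$i\<bar>"
      using cube_coord x y z by (intro line_fun_lipschitz[OF pd_ex pd_le z]) auto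
    moreover have "line_fun i f ?z (y$i) = f (\<chi> j. if j \<in> insert i S then y$j else x$j)"
      unfolding line_fun_def by (rule arg_cong[where f=f]) (auto simp: vec_eq_iff)
    moreover have "line_fun i f ?z (?z$i) = f ?z" by (rule line_fun_at_coord)
    moreover have "?z$i = x$i" using insert.hyps by simp
    ultimately have "\<bar>f (\<chi> j. if j \<in> insert i S then y$j else x$j) - f ?z\<bar> \<le> B * \<bar>y$i - x$i\<bar>"
      by metis
    then show ?case using insert by (simp add: distrib_left)
  qed
  from this[of UNIV] show ?thesis by (simp add: vec_eq_iff[symmetric])
qed

lemma subcube_near:
  fixes x :: "real^'n::finite"
  assumes x: "x \<in> cube" and s: "0 < s" "s \<le> 1"
  obtains l u where "cbox l u \<subseteq> cube" "measure lborel (cbox l u) = s ^ CARD('n)"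
    "\<And>y j. y \<in> cbox l u \<Longrightarrow> \<bar>y$j - x$j\<bar> \<le> s"
proof
  define l :: "real^'n" where "l = (\<chi> j. min (x$j) (1 - s))"
  define u :: "real^'n" where "u = (\<chi> j. min (x$j) (1 - s) + s)"
  have y: "min (x$j) (1 - s) \<le> y$j \<and> y$j \<le> min (x$j) (1 - s) + s" if "y \<in> cbox l u" for y j
    using that by (simp add: mem_box_cart l_def u_def)
  show "cbox l u \<subseteq> cube"
  proof
    fix y assume y_in: "y \<in> cbox l u"
    have "0 \<le> y$j \<and> y$j \<le> 1" for j
      using y[OF y_in, of j] cube_coord[OF x, of j] s by (auto simp: min_def split: if_splits)
    then show "y \<in> cube" by (simp add: cube_def)
  qed
  show "\<bar>y$j - x$j\<bar> \<le> s" if "y \<in> cbox l u" for y j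
    using y[OF that, of j] cube_coord[OF x, of j] by (auto simp: abs_le_iff)
  have "cbox l u \<noteq> {}"
    using s by (simp add: box_ne_empty inner_axis Basis_vec_def l_def u_def)
  then show "measure lborel (cbox l u) = s ^ CARD('n)"
    by (simp add: content_cbox_cart l_def u_def)
qed

text \<open>On a subcube of side \<open>1/M\<close> around \<open>x\<close> the exponent drops by at most \<open>d\<close>.\<close>
lemma Zf_lower:
  fixes f :: "real^'n::finite \<Rightarrow> real"
  assumes cont: "continuous_on cube f"
    and pd_ex: "\<forall>i. \<forall>x\<in>cube. pd_exists i f x" and pd_le: "\<forall>i. \<forall>x\<in>cube. \<bar>pd i f x\<bar> \<le> M"
    and M1: "1 \<le> M" and x: "x \<in> cube"
  shows "exp (f x - real CARD('n)) / M ^ CARD('n) \<le> Zf f"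
proof -
  define s where "s = 1 / M"
  have s: "0 < s" "s \<le> 1" "M * s = 1" unfolding s_def using M1 by auto
  obtain l u where sub: "cbox l u \<subseteq> cube" and content: "measure lborel (cbox l u) = s ^ CARD('n)"
    and near: "\<And>y j. y \<in> cbox l u \<Longrightarrow> \<bar>y$j - x$j\<bar> \<le> s"
    using subcube_near[OF x s(1,2)] by blast
  have f_ge: "f x - real CARD('n) \<le> f y" if y: "y \<in> cbox l u" for y
  proof -
    have "\<bar>f y - f x\<bar> \<le> M * (\<Sum>j\<in>UNIV. \<bar>y$j - x$j\<bar>)"
      using lipschitz_l1_cube[OF pd_ex pd_le x] sub y by blast
    also have "\<dots> \<le> M * (\<Sum>j\<in>(UNIV::'n set). s)"
      using near[OF y] M1 by (intro mult_left_mono sum_mono) auto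
    also have "\<dots> = real CARD('n)" using s(3) by simp
    finally show ?thesis by simp
  qed
  have exp_cont: "continuous_on cube (\<lambda>y. exp (f y))" using cont by (intro continuous_intros)
  have exp_int: "(\<lambda>y. exp (f y)) integrable_on cube"
    using exp_cont unfolding cube_cbox by (rule integrable_continuous)
  have "s ^ CARD('n) * exp (f x - real CARD('n)) = integral (cbox l u) (\<lambda>y. exp (f x - real CARD('n)))"
    using content by simp
  also have "\<dots> \<le> integral (cbox l u) (\<lambda>y. exp (f y))"
    using f_ge continuous_on_subset[OF exp_cont sub]
    by (intro integral_le integrable_continuous) auto
  also have "\<dots> \<le> Zf f"
    unfolding Zf_def using exp_int continuous_on_subset[OF exp_cont sub] sub
    by (intro integral_subset_le integrable_continuous) auto
  finally show ?thesis using s by (simp add: s_def power_one_over field_simps)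
qed

lemma dens_le:
  fixes f :: "real^'n::finite \<Rightarrow> real"
  assumes cont: "continuous_on cube f"
    and pd_ex: "\<forall>i. \<forall>x\<in>cube. pd_exists i f x" and pd_le: "\<forall>i. \<forall>x\<in>cube. \<bar>pd i f x\<bar> \<le> M"
    and M1: "1 \<le> M" and x: "x \<in> cube"
  shows "0 < Zf f" and "dens f x \<le> exp (real CARD('n)) * M ^ CARD('n)"
proof -
  let ?d = "real CARD('n)"
  have Z: "exp (f x - ?d) / M ^ CARD('n) \<le> Zf f" by (rule Zf_lower[OF assms])
  have lower_pos: "0 < exp (f x - ?d) / M ^ CARD('n)" using M1 by simp
  then show Z_pos: "0 < Zf f" using Z by linarith
  have "0 < Zf f * (exp (f x - ?d) / M ^ CARD('n))"
    by (rule mult_pos_pos[OF Z_pos lower_pos])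
  then have "dens f x \<le> exp (f x) / (exp (f x - ?d) / M ^ CARD('n))"
    unfolding dens_def using Z by (intro divide_left_mono) auto
  also have "\<dots> = exp ?d * M ^ CARD('n)" by (simp add: exp_diff)
  finally show "dens f x \<le> exp ?d * M ^ CARD('n)" .
qed

lemma dpart_dens_abs_le:
  fixes f :: "real^'n::finite \<Rightarrow> real"
  assumes m: "1 \<le> m" and f: "f \<in> Fclass m B" and len: "length is \<le> m" and x: "x \<in> cube"
  shows "\<bar>dpart is (dens f) x\<bar> \<le> exp (real CARD('n)) * fact m * max 1 B ^ (m + CARD('n))"
proof -
  define M where "M = max 1 B"
  have M1: "1 \<le> M" unfolding M_def by simp
  have bound: "\<bar>dpart js f y\<bar> \<le> M" if "length js \<le> m" "y \<in> cube" for js y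
    using Fclass_dpart_abs_le[OF f that] by (simp add: M_def)
  have cm: "Cm_on m f" using f by (simp add: Fclass_def)
  have pd_ex: "\<forall>i. \<forall>y\<in>cube. pd_exists i f y"
    using Cm_on_pd_exists[OF cm, of "[]"] m by simp
  have pd_le: "\<forall>i. \<forall>y\<in>cube. \<bar>pd i f y\<bar> \<le> M"
    using bound[of "[_]"] m by simp
  obtain Q where Q: "graded_bound M (m - length is) (length is) (fact (length is)) Q"
    and Qeq: "\<forall>y\<in>cube. dpart is (\<lambda>y. exp (f y) / Zf f) y = exp (f y) / Zf f * Q y"
    using dpart_exp_divide[OF cm bound M1 len] by blast
  note Z = dens_le[OF Cm_on_continuous[OF cm] pd_ex pd_le M1 x]
  have "\<bar>Q x\<bar> \<le> fact (length is) * M ^ length is"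
    using graded_bound_abs_le[OF Q x] .
  also have "\<dots> \<le> fact m * M ^ m"
    using len M1 by (intro mult_mono fact_mono power_increasing) auto
  finally have Q_le: "\<bar>Q x\<bar> \<le> fact m * M ^ m" .
  have "\<bar>dpart is (dens f) x\<bar> = dens f x * \<bar>Q x\<bar>"
    using Qeq x Z(1) by (simp add: dens_def abs_mult)
  also have "\<dots> \<le> (exp (real CARD('n)) * M ^ CARD('n)) * (fact m * M ^ m)"
    using Z(2) Q_le M1 by (intro mult_mono) (auto simp: dens_def)
  also have "\<dots> = exp (real CARD('n)) * fact m * M ^ (m + CARD('n))"
    by (simp add: power_add algebra_simps)
  finally show ?thesis unfolding M_def .
qed

lemma Cm_norm_dens_le:
  fixes f :: "real^'n::finite \<Rightarrow> real"
  assumes "1 \<le> m" "f \<in> Fclass m B"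
  shows "Cm_norm m (dens f) \<le> ereal (exp (real CARD('n)) * fact m * max 1 B ^ (m + CARD('n)))"
  unfolding Cm_norm_def using dpart_dens_abs_le[OF assms] by (intro SUP_least) auto

subsection \<open>The linear exponent\<close>

lemma prod_coords_eq_prod_Basis:
  "(\<Prod>b\<in>(Basis :: (real^'n::finite) set). h (x \<bullet> b)) = (\<Prod>j\<in>UNIV. h (x$j))"
proof -
  have Basis: "(Basis :: (real^'n) set) = (\<lambda>j. axis j 1) ` UNIV" by (auto simp: Basis_vec_def)
  have "inj (\<lambda>j::'n. axis j (1::real))" by (simp add: inj_def axis_eq_axis)
  then show ?thesis unfolding Basis by (simp add: prod.reindex inner_axis)
qed

lemma indicator_cube_prod:
  fixes x :: "real^'n::finite" and g :: "real \<Rightarrow> real"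
  shows "indicator cube x * (\<Prod>j\<in>UNIV. g (x$j)) = (\<Prod>j\<in>UNIV. indicator {0..1} (x$j) * g (x$j))"
  by (auto simp: cube_def indicator_def prod.distrib intro: prod_zero)

lemma integral_cube_prod:
  fixes g :: "real \<Rightarrow> real"
  assumes cont: "continuous_on {0..1} g" and nonneg: "\<And>t. t \<in> {0..1} \<Longrightarrow> 0 \<le> g t"
  shows "integral (cube :: (real^'n::finite) set) (\<lambda>x. \<Prod>j\<in>UNIV. g (x$j))
    = integral {0..1} g ^ CARD('n)"
proof -
  define F where "F x = (\<Prod>j\<in>UNIV. g (x$j))" for x :: "real^'n"
  define G where "G t = ennreal (indicator {0..1} t * g t)" for t
  have "continuous_on cube F"
    unfolding F_def
    by (intro continuous_on_prod continuous_on_compose2[OF cont])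
       (auto simp: cube_def intro: continuous_intros)
  then have F_int: "(F has_integral integral cube F) cube"
    unfolding cube_cbox by (intro integrable_integral integrable_continuous)
  have F_nonneg: "0 \<le> F x" if "x \<in> cube" for x
    unfolding F_def using nonneg cube_coord[OF that] by (intro prod_nonneg) auto
  have G_int: "integral\<^sup>N lborel G = ennreal (integral {0..1} g)"
    unfolding G_def using nonneg cont
    by (intro nn_integral_has_integral_lebesgue integrable_integral integrable_continuous_real)
  have G_meas: "G \<in> borel_measurable borel"
    unfolding G_def using borel_measurable_continuous_on_indicator[OF _ cont] by simp
  have "ennreal (indicator cube x * F x) = (\<Prod>b\<in>Basis. G (x \<bullet> b))" for x :: "real^'n"
    unfolding prod_coords_eq_prod_Basis[of G] unfolding G_def F_def indicator_cube_prod
    using nonneg by (intro prod_ennreal[symmetric]) (simp add: indicator_def)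
  then have "ennreal (integral cube F) = (\<integral>\<^sup>+ x. (\<Prod>b\<in>Basis. G ((x::real^'n) \<bullet> b)) \<partial>lborel)"
    using nn_integral_has_integral_lebesgue[OF F_nonneg F_int] by simp
  also have "\<dots> = (\<Prod>b\<in>(Basis :: (real^'n) set). integral\<^sup>N lborel G)"
    by (rule nn_integral_lborel_prod) (use G_meas in auto)
  also have "\<dots> = ennreal (integral {0..1} g ^ CARD('n))"
    using integral_nonneg[OF integrable_continuous_real[OF cont]] nonneg
    by (simp add: G_int ennreal_power)
  finally have "ennreal (integral cube F) = ennreal (integral {0..1} g ^ CARD('n))" .
  moreover have "0 \<le> integral cube F"
    using F_nonneg by (intro integral_nonneg has_integral_integrable[OF F_int]) auto
  moreover have "0 \<le> integral {0..1} g ^ CARD('n)"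
    using integral_nonneg[OF integrable_continuous_real[OF cont]] nonneg by simp
  ultimately show ?thesis unfolding F_def by simp
qed

lemma integral_exp_mult:
  fixes a :: real
  assumes "a \<noteq> 0"
  shows "integral {0..1} (\<lambda>t. exp (a * t)) = (exp a - 1) / a"
proof -
  have "((\<lambda>t. exp (a * t) / a) has_vector_derivative exp (a * t)) (at t within {0..1})" for t
    using assms unfolding has_real_derivative_iff_has_vector_derivative[symmetric]
    by (auto intro!: derivative_eq_intros)
  then have "((\<lambda>t. exp (a * t)) has_integral exp a / a - 1 / a) {0..1}"
    using fundamental_theorem_of_calculus[of 0 1 "\<lambda>t. exp (a * t) / a"] by simp
  then show ?thesis by (simp add: integral_unique diff_divide_distrib)
qed

lemma Zf_f_lin:
  assumes "B \<noteq> 0"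
  defines "a \<equiv> B / real CARD('n::finite)"
  shows "Zf (f_lin B :: real^'n \<Rightarrow> real) = ((exp a - 1) / a) ^ CARD('n)"
proof -
  have "exp (f_lin B x) = (\<Prod>j\<in>UNIV. exp (a * x$j))" for x :: "real^'n"
    by (simp add: f_lin_def a_def exp_sum sum_distrib_left)
  then have "Zf (f_lin B :: real^'n \<Rightarrow> real) = integral cube (\<lambda>x::real^'n. \<Prod>j\<in>UNIV. exp (a * x$j))"
    unfolding Zf_def by presburger
  also have "\<dots> = integral {0..1} (\<lambda>t. exp (a * t)) ^ CARD('n)"
    by (intro integral_cube_prod continuous_intros) auto
  also have "\<dots> = ((exp a - 1) / a) ^ CARD('n)"
    using assms(1) integral_exp_mult[of a] by (simp add: a_def)
  finally show ?thesis .
qed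

lemma pd_f_lin:
  fixes x :: "real^'n::finite"
  assumes x: "x \<in> cube"
  shows "pd_exists i (f_lin B) x \<and> pd i (f_lin B) x = B / real CARD('n)"
proof (rule pd_intro[OF x])
  let ?a = "B / real CARD('n)"
  have "(\<Sum>j\<in>UNIV - {i}. if j = i then t else x$j) = (\<Sum>j\<in>UNIV - {i}. x$j)" for t
    by (rule sum.cong) auto
  then have "(\<Sum>j\<in>UNIV. (\<chi> j. if j = i then t else x$j) $ j) = t + (\<Sum>j\<in>UNIV - {i}. x$j)" for t
    by (simp add: sum.remove[of UNIV i])
  then have "line_fun i (f_lin B) x = (\<lambda>t. ?a * t + ?a * (\<Sum>j\<in>UNIV - {i}. x$j))"
    by (simp add: line_fun_def f_lin_def fun_eq_iff distrib_left add_divide_distrib)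
  then show "(line_fun i (f_lin B) x has_real_derivative ?a) (at (x$i) within {0..1})"
    by (auto intro!: derivative_eq_intros)
qed

lemma dpart_f_lin:
  fixes js :: "'n::finite list"
  shows "(\<forall>x\<in>cube. dpart js (f_lin B) x =
      (if js = [] then f_lin B x else if length js = 1 then B / real CARD('n) else 0)) \<and>
    (\<forall>i. \<forall>x\<in>cube. pd_exists i (dpart js (f_lin B)) x)"
proof (induction js)
  case Nil
  then show ?case using pd_f_lin by auto
next
  case (Cons k js)
  define c where "c = (if js = [] then B / real CARD('n) else 0)"
  have const: "\<forall>x\<in>cube. dpart (k # js) (f_lin B) x = c"
  proof (cases "js = []")
    case True
    then show ?thesis using pd_f_lin[of _ k B] by (simp add: c_def)
  next
    case False
    then obtain c' where "\<forall>x\<in>cube. dpart js (f_lin B) x = c'" using Cons.IH by auto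
    then show ?thesis
      using False pd_const_on_cube[of _ "dpart js (f_lin B)" c' k] by (simp add: c_def)
  qed
  moreover have "pd_exists i (dpart (k # js) (f_lin B)) x" if "x \<in> cube" for i x
    using pd_const_on_cube[OF that const] by blast
  ultimately show ?case by (simp add: c_def)
qed

lemma f_lin_in_Fclass:
  assumes B: "0 \<le> B"
  shows "(f_lin B :: real^'n::finite \<Rightarrow> real) \<in> Fclass m B"
proof -
  let ?a = "B / real CARD('n)"
  let ?D = "\<lambda>js (x :: real^'n). if js = [] then f_lin B x else if length js = 1 then ?a else 0"
  have "1 \<le> real CARD('n)" by simp
  then have a: "0 \<le> ?a" "?a \<le> B" using B by (auto simp: divide_le_eq mult_le_cancel_left1)
  have "continuous_on cube (dpart js (f_lin B))" for js :: "'n list"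
  proof (rule continuous_on_eq)
    show "continuous_on cube (?D js)"
      by (cases "js = []") (auto simp: f_lin_def intro!: continuous_intros)
    show "?D js x = dpart js (f_lin B) x" if "x \<in> cube" for x
      using dpart_f_lin[of js B] that by simp
  qed
  then have Cm: "Cm_on m (f_lin B :: real^'n \<Rightarrow> real)"
    unfolding Cm_on_def using dpart_f_lin by blast
  have "\<bar>f_lin B x\<bar> \<le> B" if "x \<in> cube" for x :: "real^'n"
  proof -
    have S: "0 \<le> (\<Sum>j\<in>UNIV. x$j)" "(\<Sum>j\<in>UNIV. x$j) \<le> real CARD('n)"
      using cube_coord[OF that] by (auto intro: sum_nonneg order.trans[OF sum_mono[of _ _ "\<lambda>_. 1"]])
    have "f_lin B x \<le> ?a * real CARD('n)"
      unfolding f_lin_def using S a by (intro mult_left_mono) auto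
    moreover have "0 \<le> f_lin B x" unfolding f_lin_def using S a by simp
    ultimately show ?thesis by simp
  qed
  then have "\<bar>dpart js (f_lin B) x\<bar> \<le> B" if "x \<in> cube" for js and x :: "real^'n"
    using dpart_f_lin[of js B] that a B by auto
  then have "Cm_norm m (f_lin B :: real^'n \<Rightarrow> real) \<le> ereal B"
    unfolding Cm_norm_def by (intro SUP_least) auto
  then show ?thesis using Cm by (simp add: Fclass_def)
qed

lemma dpart_replicate_dens_f_lin:
  fixes i :: "'n::finite"
  shows "\<forall>x\<in>cube. dpart (replicate k i) (dens (f_lin B :: real^'n \<Rightarrow> real)) x
     = (B / real CARD('n)) ^ k * dens (f_lin B) x"
proof (induction k)
  case 0
  show ?case by simp
next
  case (Suc k)
  let ?a = "B / real CARD('n)"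
  let ?f = "f_lin B :: real^'n \<Rightarrow> real"
  show ?case
  proof
    fix x :: "real^'n" assume x: "x \<in> cube"
    have dens_pd: "pd_exists i (dens ?f) x \<and> pd i (dens ?f) x = dens ?f x * ?a"
      using pd_exp_divide[OF x pd_f_lin[OF x, of i B, THEN conjunct1], of "Zf ?f"] pd_f_lin[OF x]
      unfolding dens_def by simp
    have "dpart (replicate (Suc k) i) (dens ?f) x = pd i (\<lambda>y. ?a ^ k * dens ?f y) x"
      using pd_cong[OF x Suc.IH] by simp
    also have "\<dots> = ?a ^ k * (dens ?f x * ?a)"
      using pd_cmult[OF x dens_pd[THEN conjunct1]] dens_pd by simp
    finally show "dpart (replicate (Suc k) i) (dens ?f) x = ?a ^ Suc k * dens ?f x"
      by (simp add: mult_ac)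
  qed
qed

text \<open>At the corner \<open>(1, \<dots>, 1)\<close>, where \<open>f_lin B\<close> attains its maximum \<open>B\<close>.\<close>
lemma dens_f_lin_corner_ge:
  assumes B: "0 < B"
  shows "1 \<le> dens (f_lin B :: real^'n::finite \<Rightarrow> real) (\<chi> j. 1)"
    and "(B / real CARD('n)) ^ CARD('n) \<le> dens (f_lin B :: real^'n \<Rightarrow> real) (\<chi> j. 1)"
proof -
  define a where "a = B / real CARD('n)"
  define q where "q = (exp a - 1) / a"
  have a: "0 < a" using B by (simp add: a_def)
  have "exp a * (1 - a) \<le> exp a * exp (- a)"
    using exp_ge_add_one_self[of "-a"] by (intro mult_left_mono) auto
  then have "exp a - 1 \<le> a * exp a" by (simp add: exp_minus algebra_simps)
  then have q: "0 < q" "q \<le> exp a" "a * q \<le> exp a"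
    using a by (auto simp: q_def divide_le_eq mult.commute)
  have "exp B = exp a ^ CARD('n)"
    by (simp add: a_def flip: exp_of_nat_mult)
  moreover have "f_lin B (\<chi> j. 1 :: real^'n) = B" by (simp add: f_lin_def)
  ultimately have corner: "dens (f_lin B :: real^'n \<Rightarrow> real) (\<chi> j. 1) = exp a ^ CARD('n) / q ^ CARD('n)"
    using B by (simp add: dens_def Zf_f_lin a_def q_def)
  have "q ^ CARD('n) \<le> exp a ^ CARD('n)" using q by (intro power_mono) auto
  then show "1 \<le> dens (f_lin B :: real^'n \<Rightarrow> real) (\<chi> j. 1)"
    unfolding corner using q by simp
  have "(a * q) ^ CARD('n) \<le> exp a ^ CARD('n)" using q a by (intro power_mono) auto
  then show "(B / real CARD('n)) ^ CARD('n) \<le> dens (f_lin B :: real^'n \<Rightarrow> real) (\<chi> j. 1)"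
    unfolding corner using q by (simp add: a_def[symmetric] le_divide_eq power_mult_distrib)
qed

lemma Cm_norm_dens_f_lin_ge:
  assumes B: "0 < B"
  shows "ereal ((1 / real CARD('n)) ^ (m + CARD('n)) * max 1 B ^ (m + CARD('n)))
     \<le> Cm_norm m (dens (f_lin B :: real^'n::finite \<Rightarrow> real))"
proof -
  let ?f = "f_lin B :: real^'n \<Rightarrow> real"
  let ?a = "B / real CARD('n)"
  let ?one = "\<chi> j. 1 :: real^'n"
  have one: "?one \<in> cube" by (simp add: cube_def)
  have dens_one: "1 \<le> dens ?f ?one" by (rule dens_f_lin_corner_ge(1)[OF B])
  have "(1 / real CARD('n)) ^ (m + CARD('n)) * max 1 B ^ (m + CARD('n))
      \<le> \<bar>dpart (if B \<le> 1 then [] else replicate m undefined) (dens ?f) ?one\<bar>"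
  proof (cases "B \<le> 1")
    case True
    have "(1 / real CARD('n)) ^ (m + CARD('n)) * max 1 B ^ (m + CARD('n)) \<le> 1"
      using True by (simp add: power_le_one)
    also have "\<dots> \<le> \<bar>dens ?f ?one\<bar>"
      using dens_one by linarith
    finally show ?thesis using True by simp
  next
    case False
    have "(1 / real CARD('n)) ^ (m + CARD('n)) * max 1 B ^ (m + CARD('n)) = ?a ^ m * ?a ^ CARD('n)"
      using False by (simp add: power_add power_divide)
    also have "\<dots> \<le> ?a ^ m * dens ?f ?one"
      using B dens_f_lin_corner_ge(2)[OF B] by (intro mult_left_mono) auto
    also have "\<dots> = \<bar>dpart (replicate m undefined) (dens ?f) ?one\<bar>"
      using dpart_replicate_dens_f_lin[of m "undefined :: 'n" B] one B dens_one
      by (simp add: abs_mult)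
    finally show ?thesis using False by simp
  qed
  also have "ereal \<dots> \<le> Cm_norm m (dens ?f)"
    using one by (intro abs_dpart_le_Cm_norm) auto
  finally show ?thesis by simp
qed

theorem theorem18:
  fixes m :: nat
  assumes "m \<ge> 1"
  shows "\<exists>c C. 0 < c \<and> 0 < C \<and>
    (\<forall>B>0.
       ereal (c * max 1 B ^ (m + CARD('n::finite)))
         \<le> (SUP f\<in>(Fclass m B :: (real^'n \<Rightarrow> real) set). Cm_norm m (dens f)) \<and>
       (SUP f\<in>(Fclass m B :: (real^'n \<Rightarrow> real) set). Cm_norm m (dens f))
         \<le> ereal (C * max 1 B ^ (m + CARD('n))) \<and>
       (f_lin B :: real^'n \<Rightarrow> real) \<in> Fclass m B \<and>
       ereal (c * max 1 B ^ (m + CARD('n))) \<le> Cm_norm m (dens (f_lin B :: real^'n \<Rightarrow> real)) \<and>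
       Cm_norm m (dens (f_lin B :: real^'n \<Rightarrow> real)) \<le> ereal (C * max 1 B ^ (m + CARD('n))))"
proof (intro exI conjI allI impI)
  let ?c = "(1 / real CARD('n)) ^ (m + CARD('n))"
  let ?C = "exp (real CARD('n)) * fact m"
  show "0 < ?c" "0 < ?C" by simp_all
  fix B :: real
  assume B: "0 < B"
  let ?f = "f_lin B :: real^'n \<Rightarrow> real"
  show f: "?f \<in> Fclass m B" using B by (intro f_lin_in_Fclass) simp
  show lower: "ereal (?c * max 1 B ^ (m + CARD('n))) \<le> Cm_norm m (dens ?f)"
    by (rule Cm_norm_dens_f_lin_ge[OF B])
  show "Cm_norm m (dens ?f) \<le> ereal (?C * max 1 B ^ (m + CARD('n)))"
    by (rule Cm_norm_dens_le[OF assms f])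
  show "ereal (?c * max 1 B ^ (m + CARD('n)))
      \<le> (SUP f\<in>(Fclass m B :: (real^'n \<Rightarrow> real) set). Cm_norm m (dens f))"
    using lower SUP_upper[OF f, of "\<lambda>f. Cm_norm m (dens f)"] by (rule order.trans)
  show "(SUP f\<in>(Fclass m B :: (real^'n \<Rightarrow> real) set). Cm_norm m (dens f))
      \<le> ereal (?C * max 1 B ^ (m + CARD('n)))"
    using Cm_norm_dens_le[OF assms] by (rule SUP_least)
qed

end
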